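(* A set $\mathcal{X}\subseteq\mathbb{Z}_2^\omega$ is a xor-set if and only if there exists a selector $\mathcal{S}$ of the family $\mathcal{P}$ (i.e. a set $\mathcal{S}$ containing exactly one element of each pair in $\mathcal{P}$) such that $\mathcal{X}=\bigcup\mathcal{S}$.
   Context: $\mathbb{Z}_2^\omega$ is the set of infinite binary sequences indexed by $\omega=\{0,1,2,\dots\}$. The Hamming distance is $\mathrm{hd}(x,y)=|\{k: x(k)\ne y(k)\}|\in\omega\cup\{\omega\}$; $x\sim y$ iff $\mathrm{hd}(x,y)$ is finite, and $x\approx y$ iff $\mathrm{hd}(x,y)$ is finite and even. Each equivalence class $C$ of $\sim$ is the union of exactly two equivalence classes $U_0(C),U_1(C)$ of $\approx$; let $\mathcal{P}=\{\{U_0(C),U_1(C)\}: C\in\mathbb{Z}_2^\omega/_\sim\}$. For $x\in\mathbb{Z}_2^\omega$ and $n\in\omega$, $x^{\#n}$ is the sequence obtained from $x$ by flipping the $n$-th coordinate ($x^{\#n}(k)=x(k)$ for $k\ne n$, $x^{\#n}(n)=1-x(n)$). A set $\mathcal{X}\subseteq\mathbb{Z}_2^\omega$ is a xor-set if for every $n\in\omega$ and $x\in\mathbb{Z}_2^\omega$: $x\in\mathcal{X}\iff x^{\#n}\notin\mathcal{X}$. *)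

theory Defs
  imports Main
begin

text \<open>Infinite binary sequences Z_2^omega are modelled as nat => bool.\<close>

definition diffset :: "(nat \<Rightarrow> bool) \<Rightarrow> (nat \<Rightarrow> bool) \<Rightarrow> nat set" where
  "diffset x y = {k. x k \<noteq> y k}"

definition sim_rel :: "((nat \<Rightarrow> bool) \<times> (nat \<Rightarrow> bool)) set" where
  "sim_rel = {(x, y). finite (diffset x y)}"

definition approx_rel :: "((nat \<Rightarrow> bool) \<times> (nat \<Rightarrow> bool)) set" where
  "approx_rel = {(x, y). finite (diffset x y) \<and> even (card (diffset x y))}"

definition pairs_P :: "(nat \<Rightarrow> bool) set set set" where
  "pairs_P = {{U \<in> UNIV // approx_rel. U \<subseteq> C} | C. C \<in> UNIV // sim_rel}"

definition selector :: "'a set set \<Rightarrow> 'a set \<Rightarrow> bool" where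
  "selector F S \<longleftrightarrow> S \<subseteq> \<Union>F \<and> (\<forall>p\<in>F. \<exists>!u. u \<in> S \<and> u \<in> p)"

definition flip :: "(nat \<Rightarrow> bool) \<Rightarrow> nat \<Rightarrow> (nat \<Rightarrow> bool)" where
  "flip x n = x(n := \<not> x n)"

definition xor_set :: "(nat \<Rightarrow> bool) set \<Rightarrow> bool" where
  "xor_set X \<longleftrightarrow> (\<forall>n x. x \<in> X \<longleftrightarrow> flip x n \<notin> X)"

end

theory Submission
  imports Defs
begin

text \<open>Flipping one coordinate changes the parity of Hamming distances, so the two
  \<approx>-classes inside the \<sim>-class of x are those of x and of any one-coordinate flip
  of x. A xor-set is a union of \<approx>-classes (flipping two coordinates returns to the set)
  and contains exactly one of these two classes, so its \<approx>-classes form a selector of P.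
  Conversely, the union of a selector contains x iff it contains the class of x, hence it
  contains exactly one of x and each of its one-coordinate flips.\<close>

lemma even_card_sym_diff_iff:
  assumes "finite A" "finite B"
  shows "even (card (sym_diff A B)) \<longleftrightarrow> (even (card A) \<longleftrightarrow> even (card B))"
proof -
  have "card A = card (A - B) + card (A \<inter> B)"
    using card_Int_Diff[OF assms(1), of B] by simp
  moreover have "card B = card (B - A) + card (A \<inter> B)"
    using card_Int_Diff[OF assms(2), of A] by (simp add: Int_commute)
  moreover have "card (sym_diff A B) = card (A - B) + card (B - A)"
    using assms by (intro card_Un_disjoint) auto
  ultimately show ?thesis by auto
qed

lemma diffset_commute: "diffset x y = diffset y x"
  unfolding diffset_def by auto

lemma diffset_self [simp]: "diffset x x = {}"
  unfolding diffset_def by auto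

lemma diffset_eq_sym_diff:
  "diffset x z = sym_diff (diffset x y) (diffset y z)"
  unfolding diffset_def by auto

lemma diffset_flip: "diffset x (flip y n) = sym_diff (diffset x y) {n}"
  unfolding diffset_def flip_def by auto

lemma equiv_approx_rel: "equiv UNIV approx_rel"
proof (rule equivI)
  show "trans approx_rel"
  proof (rule transI)
    fix x y z assume "(x, y) \<in> approx_rel" "(y, z) \<in> approx_rel"
    then show "(x, z) \<in> approx_rel"
      using even_card_sym_diff_iff[of "diffset x y" "diffset y z"] diffset_eq_sym_diff[of x z y]
      unfolding approx_rel_def by auto
  qed
qed (auto simp: approx_rel_def refl_on_def sym_def diffset_commute)

lemma equiv_sim_rel: "equiv UNIV sim_rel"
proof (rule equivI)
  show "trans sim_rel"
  proof (rule transI)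
    fix x y z assume "(x, y) \<in> sim_rel" "(y, z) \<in> sim_rel"
    then show "(x, z) \<in> sim_rel"
      using diffset_eq_sym_diff[of x z y] unfolding sim_rel_def by auto
  qed
qed (auto simp: sim_rel_def refl_on_def sym_def diffset_commute)

lemma approx_rel_subset_sim_rel: "approx_rel \<subseteq> sim_rel"
  unfolding approx_rel_def sim_rel_def by auto

lemma flip_in_sim_rel: "(x, flip x n) \<in> sim_rel"
  by (simp add: sim_rel_def diffset_flip)

lemma flip_not_in_approx_rel: "(x, flip x n) \<notin> approx_rel"
  by (simp add: approx_rel_def diffset_flip)

lemma approx_class_neq_flip: "approx_rel `` {x} \<noteq> approx_rel `` {flip x n}"
  using equiv_class_eq_iff[OF equiv_approx_rel] flip_not_in_approx_rel by blast

lemma sim_rel_imp_approx_rel_or_flip: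
  assumes "(x, z) \<in> sim_rel"
  shows "(x, z) \<in> approx_rel \<or> (flip x n, z) \<in> approx_rel"
proof -
  have fin: "finite (diffset x z)"
    using assms unfolding sim_rel_def by simp
  have flipped: "diffset (flip x n) z = sym_diff (diffset x z) {n}"
    using diffset_flip[of z x n] by (simp add: diffset_commute)
  have "even (card (diffset (flip x n) z)) \<longleftrightarrow> odd (card (diffset x z))"
    unfolding flipped using even_card_sym_diff_iff[OF fin, of "{n}"] by simp
  then show ?thesis
    using fin flipped by (auto simp: approx_rel_def)
qed

lemma approx_classes_in_sim_class:
  "{U \<in> UNIV // approx_rel. U \<subseteq> sim_rel `` {x}} = {approx_rel `` {x}, approx_rel `` {flip x n}}"
proof (intro equalityI subsetI)
  fix U assume "U \<in> {U \<in> UNIV // approx_rel. U \<subseteq> sim_rel `` {x}}"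
  then obtain z where U: "U = approx_rel `` {z}" and "U \<subseteq> sim_rel `` {x}"
    by (auto elim: quotientE)
  moreover have "z \<in> U"
    unfolding U using equiv_class_self[OF equiv_approx_rel] by simp
  ultimately have "(x, z) \<in> approx_rel \<or> (flip x n, z) \<in> approx_rel"
    using sim_rel_imp_approx_rel_or_flip by blast
  then show "U \<in> {approx_rel `` {x}, approx_rel `` {flip x n}}"
    unfolding U using equiv_class_eq[OF equiv_approx_rel] by blast
next
  have "approx_rel `` {y} \<subseteq> sim_rel `` {x}" if "(x, y) \<in> sim_rel" for y
    using that approx_rel_subset_sim_rel equiv_sim_rel unfolding equiv_def trans_def by blast
  then show "U \<in> {U \<in> UNIV // approx_rel. U \<subseteq> sim_rel `` {x}}"
    if "U \<in> {approx_rel `` {x}, approx_rel `` {flip x n}}" for U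
    using that flip_in_sim_rel equiv_class_self[OF equiv_sim_rel] by (auto intro: quotientI)
qed

lemma pairs_P_eq_range: "pairs_P = range (\<lambda>x. {approx_rel `` {x}, approx_rel `` {flip x n}})"
  unfolding pairs_P_def approx_classes_in_sim_class[symmetric] by (auto simp: quotient_def)

lemma Union_pairs_P: "\<Union> pairs_P = UNIV // approx_rel"
  unfolding pairs_P_eq_range[of 0] by (auto simp: quotient_def)

lemma ex1_mem_doubleton_iff:
  assumes "a \<noteq> b"
  shows "(\<exists>!u. u \<in> S \<and> u \<in> {a, b}) \<longleftrightarrow> (a \<in> S \<longleftrightarrow> b \<notin> S)"
  using assms by blast

lemma ball_pairs_P_iff:
  "(\<forall>p\<in>pairs_P. Q p) \<longleftrightarrow> (\<forall>x. Q {approx_rel `` {x}, approx_rel `` {flip x n}})"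
  unfolding pairs_P_eq_range[of n] by blast

lemma selector_pairs_P_iff:
  "selector pairs_P S \<longleftrightarrow>
    S \<subseteq> UNIV // approx_rel \<and> (\<forall>n x. approx_rel `` {x} \<in> S \<longleftrightarrow> approx_rel `` {flip x n} \<notin> S)"
proof -
  have "(\<forall>p\<in>pairs_P. \<exists>!u. u \<in> S \<and> u \<in> p) \<longleftrightarrow> (\<forall>n::nat. \<forall>p\<in>pairs_P. \<exists>!u. u \<in> S \<and> u \<in> p)"
    by simp
  also have "\<dots> \<longleftrightarrow> (\<forall>n x. approx_rel `` {x} \<in> S \<longleftrightarrow> approx_rel `` {flip x n} \<notin> S)"
  proof (rule all_cong1)
    fix n :: nat
    show "(\<forall>p\<in>pairs_P. \<exists>!u. u \<in> S \<and> u \<in> p) \<longleftrightarrow>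
        (\<forall>x. approx_rel `` {x} \<in> S \<longleftrightarrow> approx_rel `` {flip x n} \<notin> S)"
      unfolding ball_pairs_P_iff[of _ n] ex1_mem_doubleton_iff[OF approx_class_neq_flip] ..
  qed
  finally show ?thesis
    unfolding selector_def Union_pairs_P by simp
qed

lemma mem_Union_iff_class_mem:
  assumes "equiv UNIV r" "S \<subseteq> UNIV // r"
  shows "x \<in> \<Union>S \<longleftrightarrow> r `` {x} \<in> S"
proof
  assume "x \<in> \<Union>S"
  then obtain U where "U \<in> S" "x \<in> U" by blast
  moreover from \<open>U \<in> S\<close> obtain y where "U = r `` {y}"
    using assms(2) by (auto elim: quotientE)
  ultimately show "r `` {x} \<in> S"
    using equiv_class_eq[OF assms(1)] by auto
qed (use equiv_class_self[OF assms(1)] in blast)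

lemma Union_quotient_of_closed:
  assumes "equiv UNIV r" "r `` X \<subseteq> X"
  shows "\<Union>(X // r) = X"
  using assms equiv_class_self[OF assms(1)] by (auto simp: quotient_def)

lemma xor_set_mem_iff_even_diffset:
  assumes "xor_set X" "finite (diffset x y)"
  shows "(x \<in> X \<longleftrightarrow> y \<in> X) \<longleftrightarrow> even (card (diffset x y))"
  using assms(2)
proof (induction "card (diffset x y)" arbitrary: y)
  case 0
  then have "x = y"
    unfolding diffset_def by auto
  then show ?case by simp
next
  case (Suc m)
  then obtain n where n: "n \<in> diffset x y"
    by fastforce
  have "diffset x (flip y n) = diffset x y - {n}"
    unfolding diffset_flip using n by auto
  then have smaller: "card (diffset x (flip y n)) = m" "finite (diffset x (flip y n))"
    using Suc.hyps(2) Suc.prems n by auto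
  have "y \<in> X \<longleftrightarrow> flip y n \<notin> X"
    using assms(1) unfolding xor_set_def by blast
  moreover have "(x \<in> X \<longleftrightarrow> flip y n \<in> X) \<longleftrightarrow> even m"
    using Suc.hyps(1)[of "flip y n"] smaller by simp
  ultimately show ?case
    using Suc.hyps(2)[symmetric] by auto
qed

lemma xor_set_approx_closed:
  assumes "xor_set X"
  shows "approx_rel `` X \<subseteq> X"
  using xor_set_mem_iff_even_diffset[OF assms] by (auto simp: approx_rel_def)

theorem lemma12:
  fixes X :: "(nat \<Rightarrow> bool) set"
  shows "xor_set X \<longleftrightarrow> (\<exists>S. selector pairs_P S \<and> X = \<Union>S)"
proof
  assume xor: "xor_set X"
  have classes: "X // approx_rel \<subseteq> UNIV // approx_rel"
    by (auto simp: quotient_def)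
  have union: "\<Union>(X // approx_rel) = X"
    using Union_quotient_of_closed[OF equiv_approx_rel xor_set_approx_closed[OF xor]] .
  have "approx_rel `` {x} \<in> X // approx_rel \<longleftrightarrow> x \<in> X" for x
    using mem_Union_iff_class_mem[OF equiv_approx_rel classes, of x] by (simp add: union)
  with xor have "selector pairs_P (X // approx_rel)"
    using classes by (simp add: selector_pairs_P_iff xor_set_def)
  with union show "\<exists>S. selector pairs_P S \<and> X = \<Union>S"
    by blast
next
  assume "\<exists>S. selector pairs_P S \<and> X = \<Union>S"
  then obtain S where "selector pairs_P S" and X: "X = \<Union>S"
    by blast
  then have classes: "S \<subseteq> UNIV // approx_rel"
    and one_of_pair: "\<And>n x. approx_rel `` {x} \<in> S \<longleftrightarrow> approx_rel `` {flip x n} \<notin> S"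
    by (simp_all add: selector_pairs_P_iff)
  show "xor_set X"
    unfolding xor_set_def X mem_Union_iff_class_mem[OF equiv_approx_rel classes]
    using one_of_pair by blast
qed

end
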